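(* Let $\ell>0$, $M=\mathbb R\times\{x\in\mathbb R^2:|x|<\ell\}$ with coordinates $(t,x^1,x^2)$, $\lambda(x)=\log\frac{2}{1-|x|^2/\ell^2}$ and $\kappa=-\lambda$. Take the Newton-Cartan background $$\tau_\mu dx^\mu=e^{\kappa}dt,\qquad e_\mu{}^adx^\mu=e^{\lambda}dx^a,\qquad m_\mu dx^\mu=\phi\, e^{\kappa}dt\ \text{ with }\ \phi=e^{-\kappa}$$ (so $m_\mu dx^\mu=dt$), and background fields $u=0$, $v=0$, and $v_\mu$ determined by $v_0=0$, $(v^1,v^2)=-\tfrac32\big(x^2/\ell^2,\,-x^1/\ell^2\big)$. Then the system (S$_+$) of Theorem 2 has two linearly independent nowhere-vanishing solutions, namely $\zeta_+=\exp\!\big(\tfrac{\kappa}{2}+\tfrac{\pi}{8}\gamma_0\big)\zeta_0$ for any constant Majorana spinor $\zeta_0\neq0$. Moreover, for this background the boost connection $\omega_\mu{}^a$ vanishes identically.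
   Context: Conventions: $\tau^\mu,e^\mu{}_a$ are the projective inverses ($\tau^\mu\tau_\mu=1$, $\tau^\mu e_\mu{}^a=0$, $e^\mu{}_a\tau_\mu=0$, $e^\mu{}_ae_\mu{}^b=\delta^b_a$); $v_0=\tau^\mu v_\mu$, $v_a=e^\mu{}_av_\mu$, $v^a=v_a$. $\epsilon_{12}=\epsilon^{12}=1$. $\tau_{\mu\nu}=2\partial_{[\mu}\tau_{\nu]}$, $\tau_{ab}=e^\mu{}_ae^\nu{}_b\tau_{\mu\nu}$, $\tau_{0a}=\tau^\mu e^\nu{}_a\tau_{\mu\nu}$, $\tau_{0\mu}=\tau^\nu\tau_{\nu\mu}$, $\tau^{a0}=\tau_{0a}$. Spin connections: $\omega_\mu{}^a = e^{\nu a}\partial_{[\mu}m_{\nu]} - e_\mu{}^be^{\nu a}\tau^\rho\partial_{[\nu}e_{\rho]b} - \tau^\nu\partial_{[\mu}e_{\nu]}{}^a - \tau_\mu e^{\nu a}\tau^\rho\partial_{[\nu}m_{\rho]}$, $\omega_\mu{}^{ab} = 2e^{\nu[a}\partial_{[\mu}e_{\nu]}{}^{b]} - e_\mu{}^ce^{\nu a}e^{\rho b}\partial_{[\nu}e_{\rho]c} - \tau_\mu e^{\nu a}e^{\rho b}\partial_{[\nu}m_{\rho]}$. Gamma matrices: $2\times2$, $\gamma_0^2=-\mathbb1$, $\{\gamma_a,\gamma_b\}=2\delta_{ab}$, $\{\gamma_0,\gamma_a\}=0$, $\gamma^a=\gamma_a$, $\gamma^0=-\gamma_0$, $\gamma_{ab}=\epsilon_{ab}\gamma_0$,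 $\gamma_{a0}=\epsilon_{ab}\gamma_b$; Majorana: $\zeta^*=\mathrm i\mathcal C_3\gamma^0\zeta$ with $\mathcal C_3^T=-\mathcal C_3$, $\gamma^T=-\mathcal C_3\gamma\mathcal C_3^{-1}$. $D_\mu\zeta=\partial_\mu\zeta+\tfrac14\omega_\mu{}^{ab}\gamma_{ab}\zeta$. System (S$_+$) for a commuting Majorana spinor $\zeta_+$: $(4v+\epsilon^{ab}\tau_{ab})\gamma_0\zeta_+=0$; $(\tfrac32\tau^{a0}\gamma_{a0}-\gamma^av_a+\mathrm{Re}(u)\gamma_0-\mathrm{Im}(u))\zeta_+=0$; $(\omega_\mu{}^a\gamma_{a0}+\tfrac13e_\mu{}^av_0\gamma_a)\zeta_+=0$; $D_\mu\zeta_+=(-\tfrac14\tau_{0\mu}-\tfrac12v_\mu\gamma_0+\tfrac16e_\mu{}^av^b\gamma_a\gamma_b\gamma_0+\tfrac13\tau_\mu v_0\gamma_0-\tfrac16\mathrm{Re}(u)e_\mu{}^a\gamma_a-\tfrac16\mathrm{Im}(u)e_\mu{}^a\gamma_{a0})\zeta_+$. *)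

theory Defs
  imports "HOL-Analysis.Analysis"
begin

text \<open>Points of spacetime are triples (t, x1, x2); coordinate indices mu are 0,1,2
  (0 = t); spatial frame indices a are 1,2.\<close>

type_synonym pt = "real \<times> real \<times> real"

definition shift :: "nat \<Rightarrow> real \<Rightarrow> pt \<Rightarrow> pt" where
  "shift \<mu> s p = (case p of (t, x1, x2) \<Rightarrow>
     if \<mu> = 0 then (t + s, x1, x2) else if \<mu> = 1 then (t, x1 + s, x2) else (t, x1, x2 + s))"

definition pd :: "nat \<Rightarrow> (pt \<Rightarrow> real) \<Rightarrow> pt \<Rightarrow> real" where
  "pd \<mu> f p = deriv (\<lambda>s. f (shift \<mu> s p)) 0"

definition dA :: "(nat \<Rightarrow> pt \<Rightarrow> real) \<Rightarrow> nat \<Rightarrow> nat \<Rightarrow> pt \<Rightarrow> real" where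
  "dA X \<mu> \<nu> p = (pd \<mu> (X \<nu>) p - pd \<nu> (X \<mu>) p) / 2"

text \<open>tau mu p = tau_mu, e mu a p = e_mu^a, m mu p = m_mu,
  tu mu p = tau^mu, eu mu a p = e^mu_a.\<close>

definition proj_inverse ::
  "(nat \<Rightarrow> pt \<Rightarrow> real) \<Rightarrow> (nat \<Rightarrow> nat \<Rightarrow> pt \<Rightarrow> real) \<Rightarrow>
   (nat \<Rightarrow> pt \<Rightarrow> real) \<Rightarrow> (nat \<Rightarrow> nat \<Rightarrow> pt \<Rightarrow> real) \<Rightarrow> pt \<Rightarrow> bool" where
  "proj_inverse tau e tu eu p \<longleftrightarrow>
     (\<Sum>\<mu><3. tu \<mu> p * tau \<mu> p) = 1 \<and>
     (\<forall>a\<in>{1,2}. (\<Sum>\<mu><3. tu \<mu> p * e \<mu> a p) = 0) \<and>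
     (\<forall>a\<in>{1,2}. (\<Sum>\<mu><3. eu \<mu> a p * tau \<mu> p) = 0) \<and>
     (\<forall>a\<in>{1,2}. \<forall>b\<in>{1,2}. (\<Sum>\<mu><3. eu \<mu> a p * e \<mu> b p) = (if a = b then 1 else 0))"

definition tauF :: "(nat \<Rightarrow> pt \<Rightarrow> real) \<Rightarrow> nat \<Rightarrow> nat \<Rightarrow> pt \<Rightarrow> real" where
  "tauF tau \<mu> \<nu> p = 2 * dA tau \<mu> \<nu> p"

definition tau_ab :: "(nat \<Rightarrow> pt \<Rightarrow> real) \<Rightarrow> (nat \<Rightarrow> nat \<Rightarrow> pt \<Rightarrow> real) \<Rightarrow> nat \<Rightarrow> nat \<Rightarrow> pt \<Rightarrow> real" where
  "tau_ab tau eu a b p = (\<Sum>\<mu><3. \<Sum>\<nu><3. eu \<mu> a p * eu \<nu> b p * tauF tau \<mu> \<nu> p)"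

definition tau_0a :: "(nat \<Rightarrow> pt \<Rightarrow> real) \<Rightarrow> (nat \<Rightarrow> pt \<Rightarrow> real) \<Rightarrow> (nat \<Rightarrow> nat \<Rightarrow> pt \<Rightarrow> real) \<Rightarrow> nat \<Rightarrow> pt \<Rightarrow> real" where
  "tau_0a tau tu eu a p = (\<Sum>\<mu><3. \<Sum>\<nu><3. tu \<mu> p * eu \<nu> a p * tauF tau \<mu> \<nu> p)"

definition tau_0mu :: "(nat \<Rightarrow> pt \<Rightarrow> real) \<Rightarrow> (nat \<Rightarrow> pt \<Rightarrow> real) \<Rightarrow> nat \<Rightarrow> pt \<Rightarrow> real" where
  "tau_0mu tau tu \<mu> p = (\<Sum>\<nu><3. tu \<nu> p * tauF tau \<nu> \<mu> p)"

definition omega1 ::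
  "(nat \<Rightarrow> pt \<Rightarrow> real) \<Rightarrow> (nat \<Rightarrow> nat \<Rightarrow> pt \<Rightarrow> real) \<Rightarrow> (nat \<Rightarrow> pt \<Rightarrow> real) \<Rightarrow>
   (nat \<Rightarrow> pt \<Rightarrow> real) \<Rightarrow> (nat \<Rightarrow> nat \<Rightarrow> pt \<Rightarrow> real) \<Rightarrow> nat \<Rightarrow> nat \<Rightarrow> pt \<Rightarrow> real" where
  "omega1 tau e m tu eu \<mu> a p =
     (\<Sum>\<nu><3. eu \<nu> a p * dA m \<mu> \<nu> p)
     - (\<Sum>b\<in>{1,2}. \<Sum>\<nu><3. \<Sum>\<rho><3. e \<mu> b p * eu \<nu> a p * tu \<rho> p * dA (\<lambda>\<sigma>. e \<sigma> b) \<nu> \<rho> p)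
     - (\<Sum>\<nu><3. tu \<nu> p * dA (\<lambda>\<sigma>. e \<sigma> a) \<mu> \<nu> p)
     - tau \<mu> p * (\<Sum>\<nu><3. \<Sum>\<rho><3. eu \<nu> a p * tu \<rho> p * dA m \<nu> \<rho> p)"

text \<open>rotation connection omega_mu^{ab}; 2 X^{[ab]} = X^{ab} - X^{ba}\<close>
definition omega2 ::
  "(nat \<Rightarrow> pt \<Rightarrow> real) \<Rightarrow> (nat \<Rightarrow> nat \<Rightarrow> pt \<Rightarrow> real) \<Rightarrow> (nat \<Rightarrow> pt \<Rightarrow> real) \<Rightarrow>
   (nat \<Rightarrow> nat \<Rightarrow> pt \<Rightarrow> real) \<Rightarrow> nat \<Rightarrow> nat \<Rightarrow> nat \<Rightarrow> pt \<Rightarrow> real" where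
  "omega2 tau e m eu \<mu> a b p =
     (\<Sum>\<nu><3. eu \<nu> a p * dA (\<lambda>\<sigma>. e \<sigma> b) \<mu> \<nu> p - eu \<nu> b p * dA (\<lambda>\<sigma>. e \<sigma> a) \<mu> \<nu> p)
     - (\<Sum>c\<in>{1,2}. \<Sum>\<nu><3. \<Sum>\<rho><3. e \<mu> c p * eu \<nu> a p * eu \<rho> b p * dA (\<lambda>\<sigma>. e \<sigma> c) \<nu> \<rho> p)
     - tau \<mu> p * (\<Sum>\<nu><3. \<Sum>\<rho><3. eu \<nu> a p * eu \<rho> b p * dA m \<nu> \<rho> p)"

type_synonym spinor = "complex^2"
type_synonym cmat = "complex^2^2"

definition gam :: "nat \<Rightarrow> cmat" where
  "gam i = (if i = 0 then vector [vector [0, -1], vector [1, 0]]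
            else if i = 1 then vector [vector [0, 1], vector [1, 0]]
            else vector [vector [1, 0], vector [0, -1]])"

definition gam2 :: "nat \<Rightarrow> nat \<Rightarrow> cmat" where
  "gam2 i j = (1/2::real) *\<^sub>R (gam i ** gam j - gam j ** gam i)"

definition C3 :: cmat where
  "C3 = vector [vector [0, 1], vector [-1, 0]]"

definition gam_up0 :: cmat where "gam_up0 = - gam 0"

definition vconj :: "spinor \<Rightarrow> spinor" where
  "vconj z = (\<chi> i. cnj (z $ i))"

definition majorana :: "spinor \<Rightarrow> bool" where
  "majorana z \<longleftrightarrow> vconj z = \<i> *s ((C3 ** gam_up0) *v z)"

primrec mpow :: "cmat \<Rightarrow> nat \<Rightarrow> cmat" where
  "mpow A 0 = mat 1"
| "mpow A (Suc n) = A ** mpow A n"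

definition mexp :: "cmat \<Rightarrow> cmat" where
  "mexp A = (\<Sum>n. (1 / fact n :: real) *\<^sub>R mpow A n)"

definition Splus_solution ::
  "pt set \<Rightarrow> (nat \<Rightarrow> pt \<Rightarrow> real) \<Rightarrow> (nat \<Rightarrow> nat \<Rightarrow> pt \<Rightarrow> real) \<Rightarrow> (nat \<Rightarrow> pt \<Rightarrow> real) \<Rightarrow>
   (nat \<Rightarrow> pt \<Rightarrow> real) \<Rightarrow> (nat \<Rightarrow> nat \<Rightarrow> pt \<Rightarrow> real) \<Rightarrow>
   (pt \<Rightarrow> complex) \<Rightarrow> (pt \<Rightarrow> real) \<Rightarrow> (nat \<Rightarrow> pt \<Rightarrow> real) \<Rightarrow> (pt \<Rightarrow> spinor) \<Rightarrow> bool" where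
  "Splus_solution Mset tau e m tu eu u v vf \<zeta> \<longleftrightarrow>
    (\<forall>p\<in>Mset.
      let v0 = (\<Sum>\<mu><3. tu \<mu> p * vf \<mu> p);
          va = (\<lambda>a. \<Sum>\<mu><3. eu \<mu> a p * vf \<mu> p)
      in
      majorana (\<zeta> p) \<and>
      ((4 * v p + (tau_ab tau eu 1 2 p - tau_ab tau eu 2 1 p)) *\<^sub>R gam 0) *v \<zeta> p = 0 \<and>
      ((\<Sum>a\<in>{1,2}. (3/2 * tau_0a tau tu eu a p) *\<^sub>R gam2 a 0)
        - (\<Sum>a\<in>{1,2}. va a *\<^sub>R gam a)
        + Re (u p) *\<^sub>R gam 0 - Im (u p) *\<^sub>R mat 1) *v \<zeta> p = 0 \<and>
      (\<forall>\<mu><3. ((\<Sum>a\<in>{1,2}. omega1 tau e m tu eu \<mu> a p *\<^sub>R gam2 a 0)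
               + (\<Sum>a\<in>{1,2}. (1/3 * e \<mu> a p * v0) *\<^sub>R gam a)) *v \<zeta> p = 0) \<and>
      (\<forall>\<mu><3. ((\<lambda>s. \<zeta> (shift \<mu> s p)) has_vector_derivative
          ((( - (1/4 * tau_0mu tau tu \<mu> p)) *\<^sub>R mat 1
            - (1/2 * vf \<mu> p) *\<^sub>R gam 0
            + (\<Sum>a\<in>{1,2}. \<Sum>b\<in>{1,2}. (1/6 * e \<mu> a p * va b) *\<^sub>R (gam a ** gam b ** gam 0))
            + (1/3 * tau \<mu> p * v0) *\<^sub>R gam 0
            - (1/6 * Re (u p)) *\<^sub>R (\<Sum>a\<in>{1,2}. e \<mu> a p *\<^sub>R gam a)
            - (1/6 * Im (u p)) *\<^sub>R (\<Sum>a\<in>{1,2}. e \<mu> a p *\<^sub>R gam2 a 0)) *v \<zeta> p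
           - ((1/4::real) *\<^sub>R (\<Sum>a\<in>{1,2}. \<Sum>b\<in>{1,2}. omega2 tau e m eu \<mu> a b p *\<^sub>R gam2 a b)) *v \<zeta> p))
        (at 0)))"

definition Mdom :: "real \<Rightarrow> pt set" where
  "Mdom l = {(t, x1, x2). x1^2 + x2^2 < l^2}"

definition lamB :: "real \<Rightarrow> pt \<Rightarrow> real" where
  "lamB l p = (case p of (t, x1, x2) \<Rightarrow> ln (2 / (1 - (x1^2 + x2^2) / l^2)))"

definition kapB :: "real \<Rightarrow> pt \<Rightarrow> real" where
  "kapB l p = - lamB l p"

definition phiB :: "real \<Rightarrow> pt \<Rightarrow> real" where
  "phiB l p = exp (- kapB l p)"

definition tauB :: "real \<Rightarrow> nat \<Rightarrow> pt \<Rightarrow> real" where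
  "tauB l \<mu> p = (if \<mu> = 0 then exp (kapB l p) else 0)"

definition eB :: "real \<Rightarrow> nat \<Rightarrow> nat \<Rightarrow> pt \<Rightarrow> real" where
  "eB l \<mu> a p = (if \<mu> = a then exp (lamB l p) else 0)"

definition mB :: "real \<Rightarrow> nat \<Rightarrow> pt \<Rightarrow> real" where
  "mB l \<mu> p = (if \<mu> = 0 then phiB l p * exp (kapB l p) else 0)"

definition zeta_plus :: "real \<Rightarrow> spinor \<Rightarrow> pt \<Rightarrow> spinor" where
  "zeta_plus l \<zeta>0 p = mexp ((kapB l p / 2) *\<^sub>R mat 1 + (pi / 8) *\<^sub>R gam 0) *v \<zeta>0"

end

theory Submission
  imports Defs
begin

text \<open>The frame is diagonal, so its projective inverses are forced, and every component of
  \<open>\<tau>\<^sub>\<mu>\<^sub>\<nu>\<close> and of the spin connection is a multiple of a derivative of \<open>\<lambda>\<close>. The boost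
  connection vanishes because \<open>m\<close> is closed, the background is static and \<open>\<tau>\<close> points
  along \<open>dt\<close>; the rotation connection is \<open>\<omega>\<^sub>\<mu>\<^sup>a\<^sup>b = \<delta>\<^sub>\<mu>\<^sup>a \<partial>\<^sub>b\<lambda> - \<delta>\<^sub>\<mu>\<^sup>b \<partial>\<^sub>a\<lambda>\<close>.
  With the given \<open>v\<^sup>a\<close> the algebraic constraints cancel, and the right-hand side of the
  differential equation, which lives in the span of \<open>1\<close> and \<open>\<gamma>\<^sub>0\<close>, collapses to
  \<open>-\<partial>\<^sub>\<mu>\<lambda>/2 = \<partial>\<^sub>\<mu>\<kappa>/2\<close>: exactly the logarithmic derivative of the factor \<open>exp(\<kappa>/2)\<close>.
  The constant factor \<open>exp(\<pi>/8 \<gamma>\<^sub>0)\<close> is a real rotation, so it preserves the Majorana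
  condition and is invertible.\<close>

lemma has_real_derivative_ln_conformal_factor:
  assumes "l > 0" "a\<^sup>2 + b\<^sup>2 < l\<^sup>2"
  shows "((\<lambda>s. ln (2 / (1 - ((a + s)\<^sup>2 + b\<^sup>2) / l\<^sup>2))) has_real_derivative
           2 * a / (l\<^sup>2 - (a\<^sup>2 + b\<^sup>2))) (at 0)"
proof -
  define u where "u = 1 - (a\<^sup>2 + b\<^sup>2) / l\<^sup>2"
  have u: "u = (l\<^sup>2 - (a\<^sup>2 + b\<^sup>2)) / l\<^sup>2" "u > 0"
    using assms by (simp_all add: u_def field_simps)
  have "((\<lambda>s. ln (2 / (1 - ((a + s)\<^sup>2 + b\<^sup>2) / l\<^sup>2))) has_real_derivative
           inverse (2 / u) * (- (2 * (- (2 * a / l\<^sup>2))) / u\<^sup>2)) (at 0)"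
    using u assms by (auto intro!: derivative_eq_intros simp: u_def power2_eq_square)
  moreover have "inverse (2 / u) * (- (2 * (- (2 * a / l\<^sup>2))) / u\<^sup>2) = 2 * a / (l\<^sup>2 - (a\<^sup>2 + b\<^sup>2))"
    using u assms by (simp add: field_simps power2_eq_square)
  ultimately show ?thesis by simp
qed

text \<open>\<open>\<partial>\<^sub>\<mu>\<lambda>\<close>; like \<open>shift\<close>, every index \<open>\<mu> \<ge> 2\<close> is treated as \<open>x2\<close>.\<close>
definition dlamB :: "real \<Rightarrow> nat \<Rightarrow> pt \<Rightarrow> real" where
  "dlamB l \<mu> p = (case p of (t, x1, x2) \<Rightarrow>
     if \<mu> = 0 then 0 else 2 * (if \<mu> = 1 then x1 else x2) / (l\<^sup>2 - (x1\<^sup>2 + x2\<^sup>2)))"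

lemma has_real_derivative_lamB:
  assumes "l > 0" "p \<in> Mdom l"
  shows "((\<lambda>s. lamB l (shift \<mu> s p)) has_real_derivative dlamB l \<mu> p) (at 0)"
proof -
  obtain t x1 x2 where p: "p = (t, x1, x2)" by (cases p)
  have r: "x1\<^sup>2 + x2\<^sup>2 < l\<^sup>2" "x2\<^sup>2 + x1\<^sup>2 < l\<^sup>2" using assms(2) by (simp_all add: p Mdom_def)
  show ?thesis
    using has_real_derivative_ln_conformal_factor[OF assms(1) r(1)]
          has_real_derivative_ln_conformal_factor[OF assms(1) r(2)]
    by (auto simp: p lamB_def shift_def dlamB_def add.commute)
qed

lemma shift_zero [simp]: "shift \<mu> 0 p = p"
  by (cases p) (simp add: shift_def)

lemma pd_exp_lamB:
  assumes "l > 0" "p \<in> Mdom l"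
  shows "pd \<mu> (\<lambda>q. exp (c * lamB l q)) p = c * dlamB l \<mu> p * exp (c * lamB l p)"
  unfolding pd_def
  by (rule DERIV_imp_deriv)
     (use DERIV_chain2[OF DERIV_exp DERIV_cmult[OF has_real_derivative_lamB[OF assms]]]
       in \<open>simp add: mult_ac\<close>)

lemma pd_const [simp]: "pd \<mu> (\<lambda>q. c) p = 0"
  unfolding pd_def by simp

lemma tauB_eq: "tauB l \<nu> = (if \<nu> = 0 then (\<lambda>q. exp (- lamB l q)) else (\<lambda>q. 0))"
  by (auto simp: tauB_def kapB_def)

lemma eB_eq: "eB l \<nu> b = (if \<nu> = b then (\<lambda>q. exp (lamB l q)) else (\<lambda>q. 0))"
  by (auto simp: eB_def)

lemma mB_eq: "mB l \<nu> = (if \<nu> = 0 then (\<lambda>q. 1) else (\<lambda>q. 0))"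
  by (auto simp: mB_def phiB_def kapB_def mult_exp_exp)

lemma pd_tauB:
  assumes "l > 0" "p \<in> Mdom l"
  shows "pd \<mu> (tauB l \<nu>) p = (if \<nu> = 0 then - dlamB l \<mu> p * exp (kapB l p) else 0)"
  using pd_exp_lamB[OF assms, of \<mu> "-1"] by (simp add: tauB_eq kapB_def)

lemma pd_eB:
  assumes "l > 0" "p \<in> Mdom l"
  shows "pd \<mu> (eB l \<nu> b) p = (if \<nu> = b then dlamB l \<mu> p * exp (lamB l p) else 0)"
  using pd_exp_lamB[OF assms, of \<mu> 1] by (simp add: eB_eq)

lemma pd_mB: "pd \<mu> (mB l \<nu>) p = 0"
  by (simp add: mB_eq)

lemma sum_lessThan_3: "(\<Sum>\<mu><3::nat. f \<mu>) = f 0 + f 1 + (f 2 :: 'a::comm_monoid_add)"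
  by (simp add: numeral_3_eq_3 numeral_2_eq_2 One_nat_def add_ac)

lemma less_3_cases:
  assumes "\<mu> < (3 :: nat)" "\<mu> = 0 \<Longrightarrow> P" "\<mu> = 1 \<Longrightarrow> P" "\<mu> = 2 \<Longrightarrow> P"
  shows P
  using assms by (auto simp: numeral_3_eq_3 numeral_2_eq_2 less_Suc_eq)

lemma proj_inverse_diagonal:
  assumes inv: "proj_inverse tau e tu eu p"
    and tau: "\<And>\<mu>. tau \<mu> p = (if \<mu> = 0 then T else 0)"
    and e: "\<And>\<mu> a. e \<mu> a p = (if \<mu> = a then E else 0)"
    and "T \<noteq> 0" "E \<noteq> 0"
  shows "\<mu> < 3 \<Longrightarrow> tu \<mu> p = (if \<mu> = 0 then 1 / T else 0)"
    and "\<mu> < 3 \<Longrightarrow> a \<in> {1, 2} \<Longrightarrow> eu \<mu> a p = (if \<mu> = a then 1 / E else 0)"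
  using assms
  by (auto simp: proj_inverse_def sum_lessThan_3 field_simps less_Suc_eq numeral_3_eq_3 numeral_2_eq_2)

lemma scaleR_complex: "r *\<^sub>R (z :: complex) = of_real r * z"
  by (simp add: scaleR_conv_of_real)

lemmas cmat_simps = gam_def mat_def vec_eq_iff forall_2
  matrix_matrix_mult_def matrix_vector_mult_def sum_2 scaleR_complex

lemma gam2_spatial:
  "gam2 1 0 = gam 2" "gam2 2 0 = - gam 1" "gam2 1 2 = gam 0" "gam2 2 1 = - gam 0"
  "gam2 a a = 0"
  by (simp_all add: gam2_def cmat_simps)

lemma gam_triple_products:
  "gam 1 ** gam 1 ** gam 0 = gam 0" "gam 2 ** gam 2 ** gam 0 = gam 0"
  "gam 1 ** gam 2 ** gam 0 = - mat 1" "gam 2 ** gam 1 ** gam 0 = mat 1"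
  by (simp_all add: cmat_simps)

text \<open>Since \<open>\<gamma>\<^sub>0\<^sup>2 = -1\<close>, the real span of \<open>1\<close> and \<open>\<gamma>\<^sub>0\<close> is a copy of \<open>\<complex>\<close>.\<close>
definition Mc :: "complex \<Rightarrow> cmat" where
  "Mc z = Re z *\<^sub>R mat 1 + Im z *\<^sub>R gam 0"

lemma Mc_mult: "Mc z ** Mc w = Mc (z * w)"
  by (simp add: Mc_def cmat_simps complex_eq_iff algebra_simps)

lemma mpow_Mc: "mpow (Mc z) n = Mc (z ^ n)"
  by (induction n) (simp_all add: Mc_mult, simp add: Mc_def)

lemma mexp_Mc: "mexp (Mc z) = Mc (exp z)"
proof -
  have "(\<lambda>n. Re (z ^ n /\<^sub>R fact n) *\<^sub>R (mat 1 :: cmat) + Im (z ^ n /\<^sub>R fact n) *\<^sub>R gam 0) sums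
        (Re (exp z) *\<^sub>R mat 1 + Im (exp z) *\<^sub>R gam 0)"
    by (intro sums_add sums_scaleR_left sums_Re sums_Im exp_converges)
  moreover have "(1 / fact n :: real) *\<^sub>R mpow (Mc z) n =
     Re (z ^ n /\<^sub>R fact n) *\<^sub>R mat 1 + Im (z ^ n /\<^sub>R fact n) *\<^sub>R gam 0" for n
    unfolding mpow_Mc by (simp add: Mc_def scaleR_add_right divide_inverse_commute)
  ultimately show ?thesis
    by (simp add: mexp_def Mc_def[of "exp z"] sums_iff)
qed

lemma Mc_one [simp]: "Mc 1 = mat 1"
  by (simp add: Mc_def)

lemma Mc_scaleR: "Mc (of_real r * w) = r *\<^sub>R Mc w"
  by (simp add: Mc_def scaleR_add_right)

lemma Mc_invertible:
  assumes "w \<noteq> 0" "Mc w *v z = 0"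
  shows "z = 0"
proof -
  have "Mc (inverse w) ** Mc w = mat 1" using assms(1) by (simp add: Mc_mult)
  then have "z = Mc (inverse w) *v (Mc w *v z)" by (simp add: matrix_vector_mul_assoc)
  with assms(2) show ?thesis by simp
qed

lemma Mc_real_entries: "Mc w $ i $ j \<in> \<real>"
  using exhaust_2[of i] exhaust_2[of j] by (auto simp: Mc_def cmat_simps)

lemma scaleR_matrix_vector_complex: "(r *\<^sub>R A) *v v = r *\<^sub>R (A *v v :: spinor)"
  and matrix_vector_scaleR_complex: "A *v (r *\<^sub>R v) = r *\<^sub>R (A *v v :: spinor)"
  by (simp_all add: vec_eq_iff matrix_vector_mult_def scaleR_sum_right algebra_simps)

lemma majorana_iff: "majorana z \<longleftrightarrow> (\<forall>i. cnj (z $ i) = - \<i> * z $ i)"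
  by (simp add: majorana_def vconj_def C3_def gam_up0_def cmat_simps)

lemma majorana_real_matrix:
  assumes "\<And>i j. A $ i $ j \<in> \<real>" "majorana z"
  shows "majorana (A *v z)"
proof -
  have "cnj (A $ i $ j) = A $ i $ j" for i j using assms(1) Reals_cnj_iff by blast
  with assms(2) show ?thesis
    by (simp add: majorana_iff matrix_vector_mult_def sum_distrib_left algebra_simps)
qed

lemma zeta_plus_Mc: "zeta_plus l z q = Mc (exp (Complex (kapB l q / 2) (pi / 8))) *v z"
proof -
  have "(kapB l q / 2) *\<^sub>R mat 1 + (pi / 8) *\<^sub>R gam 0 = Mc (Complex (kapB l q / 2) (pi / 8))"
    by (simp add: Mc_def)
  then show ?thesis by (simp add: zeta_plus_def mexp_Mc)
qed

lemma zeta_plus_eq: "zeta_plus l z q = exp (kapB l q / 2) *\<^sub>R (Mc (cis (pi / 8)) *v z)"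
  by (simp add: zeta_plus_Mc exp_eq_polar Mc_scaleR scaleR_matrix_vector_complex)

lemma majorana_zeta_plus: "majorana z \<Longrightarrow> majorana (zeta_plus l z q)"
  unfolding zeta_plus_Mc by (rule majorana_real_matrix[OF Mc_real_entries])

lemma zeta_plus_nonzero: "z \<noteq> 0 \<Longrightarrow> zeta_plus l z q \<noteq> 0"
  unfolding zeta_plus_Mc using Mc_invertible exp_not_eq_zero by blast

lemma zeta_plus_linear_independent:
  assumes "q \<in> M"
  shows "\<exists>\<zeta>0 \<zeta>1. majorana \<zeta>0 \<and> \<zeta>0 \<noteq> 0 \<and> majorana \<zeta>1 \<and> \<zeta>1 \<noteq> 0 \<and>
           (\<forall>a b :: real. (\<forall>p\<in>M. a *\<^sub>R zeta_plus l \<zeta>0 p + b *\<^sub>R zeta_plus l \<zeta>1 p = 0)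
              \<longrightarrow> a = 0 \<and> b = 0)"
proof (intro exI conjI allI impI)
  let ?\<zeta>0 = "vector [1 + \<i>, 0] :: spinor" and ?\<zeta>1 = "vector [0, 1 + \<i>] :: spinor"
  show "majorana ?\<zeta>0" "majorana ?\<zeta>1"
    by (simp_all add: majorana_iff forall_2 algebra_simps)
  show "?\<zeta>0 \<noteq> 0" "?\<zeta>1 \<noteq> 0"
    by (simp_all add: vec_eq_iff forall_2 complex_eq_iff)
  fix a b :: real
  assume "\<forall>p\<in>M. a *\<^sub>R zeta_plus l ?\<zeta>0 p + b *\<^sub>R zeta_plus l ?\<zeta>1 p = 0"
  then have "Mc (exp (Complex (kapB l q / 2) (pi / 8))) *v (a *\<^sub>R ?\<zeta>0 + b *\<^sub>R ?\<zeta>1) = 0"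
    using assms by (simp add: zeta_plus_Mc matrix_vector_right_distrib matrix_vector_scaleR_complex)
  then have "a *\<^sub>R ?\<zeta>0 + b *\<^sub>R ?\<zeta>1 = 0"
    using Mc_invertible exp_not_eq_zero by blast
  then show "a = 0" "b = 0"
    by (simp_all add: vec_eq_iff forall_2 complex_eq_iff)
qed

lemma Splus_solution_pointwise:
  "Splus_solution M tau e m tu eu u v vf \<zeta> \<longleftrightarrow> (\<forall>p\<in>M. Splus_solution {p} tau e m tu eu u v vf \<zeta>)"
  by (simp add: Splus_solution_def)

lemma has_vector_derivative_by_scalar_matrix:
  fixes X Y :: cmat
  assumes "(f has_vector_derivative c *\<^sub>R v) F" "X - Y = c *\<^sub>R mat 1"
  shows "(f has_vector_derivative (X *v v - Y *v v)) F"
  using assms by (simp add: matrix_vector_mult_diff_rdistrib[symmetric] scaleR_matrix_vector_complex)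

locale background_point =
  fixes l t x1 x2 :: real and tu :: "nat \<Rightarrow> pt \<Rightarrow> real" and eu :: "nat \<Rightarrow> nat \<Rightarrow> pt \<Rightarrow> real"
  assumes l_pos: "l > 0"
    and in_Mdom: "(t, x1, x2) \<in> Mdom l"
    and frame: "proj_inverse (tauB l) (eB l) tu eu (t, x1, x2)"
begin

abbreviation "p \<equiv> (t, x1, x2)"
abbreviation "E \<equiv> exp (lamB l p)"
abbreviation "g \<mu> \<equiv> dlamB l \<mu> p"

lemma tauB_at: "tauB l \<mu> p = (if \<mu> = 0 then 1 / E else 0)"
  by (simp add: tauB_def kapB_def exp_minus inverse_eq_divide)

lemma eB_at: "eB l \<mu> a p = (if \<mu> = a then E else 0)"
  by (simp add: eB_def)

lemma tu_at: "\<mu> < 3 \<Longrightarrow> tu \<mu> p = (if \<mu> = 0 then E else 0)"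
  and eu_at: "\<mu> < 3 \<Longrightarrow> a \<in> {1, 2} \<Longrightarrow> eu \<mu> a p = (if \<mu> = a then 1 / E else 0)"
  using proj_inverse_diagonal[OF frame tauB_at eB_at] by simp_all

lemma pd_tauB_at: "pd \<mu> (tauB l \<nu>) p = (if \<nu> = 0 then - g \<mu> / E else 0)"
  using pd_tauB[OF l_pos in_Mdom] by (simp add: kapB_def exp_minus inverse_eq_divide)

lemma pd_eB_at: "pd \<mu> (eB l \<nu> b) p = (if \<nu> = b then g \<mu> * E else 0)"
  using pd_eB[OF l_pos in_Mdom] .

lemma dlamB_time: "g 0 = 0"
  by (simp add: dlamB_def)

lemma dlamB_space: "g 1 = E * x1 / l\<^sup>2" "g 2 = E * x2 / l\<^sup>2"
proof -
  have r: "l\<^sup>2 - (x1\<^sup>2 + x2\<^sup>2) > 0" using in_Mdom by (simp add: Mdom_def)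
  have "E = 2 * l\<^sup>2 / (l\<^sup>2 - (x1\<^sup>2 + x2\<^sup>2))"
    using r l_pos by (simp add: lamB_def field_simps)
  then show "g 1 = E * x1 / l\<^sup>2" "g 2 = E * x2 / l\<^sup>2"
    using l_pos by (simp_all add: dlamB_def)
qed

lemmas frame_at = tauB_at eB_at tu_at eu_at pd_tauB_at pd_eB_at pd_mB dlamB_time

lemma tau_ab_at: "tau_ab (tauB l) eu a b p = 0" if "a \<in> {1, 2}" "b \<in> {1, 2}"
  using that by (auto simp: tau_ab_def tauF_def dA_def sum_lessThan_3 frame_at)

lemma tau_0a_at: "tau_0a (tauB l) tu eu a p = g a / E" if "a \<in> {1, 2}"
  using that by (auto simp: tau_0a_def tauF_def dA_def sum_lessThan_3 frame_at)

lemma tau_0mu_at: "tau_0mu (tauB l) tu \<mu> p = g \<mu>" if "\<mu> < 3"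
  using that by (auto simp: tau_0mu_def tauF_def dA_def sum_lessThan_3 frame_at)

lemma omega1_at: "omega1 (tauB l) (eB l) (mB l) tu eu \<mu> a p = 0" if "\<mu> < 3" "a \<in> {1, 2}"
  using that by (auto simp: omega1_def dA_def sum_lessThan_3 frame_at)

lemma omega2_at:
  "omega2 (tauB l) (eB l) (mB l) eu \<mu> a b p = (if \<mu> = a then g b else 0) - (if \<mu> = b then g a else 0)"
  if "\<mu> < 3" "a \<in> {1, 2}" "b \<in> {1, 2}"
  using that by (auto simp: omega2_def dA_def sum_lessThan_3 frame_at)

lemma has_vector_derivative_zeta_plus:
  "((\<lambda>s. zeta_plus l z (shift \<mu> s p)) has_vector_derivative (- g \<mu> / 2) *\<^sub>R zeta_plus l z p) (at 0)"
proof -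
  have "((\<lambda>s. exp (kapB l (shift \<mu> s p) / 2)) has_real_derivative
          exp (kapB l p / 2) * (- g \<mu> / 2)) (at 0)"
    using DERIV_chain2[OF DERIV_exp
        DERIV_cdivide[OF DERIV_minus[OF has_real_derivative_lamB[OF l_pos in_Mdom]]]]
    by (simp add: kapB_def)
  from has_vector_derivative_scaleR[OF this has_vector_derivative_const]
  show ?thesis by (simp add: zeta_plus_eq mult.commute)
qed

end

locale background_point_vfield = background_point +
  fixes vf :: "nat \<Rightarrow> pt \<Rightarrow> real"
  assumes v_time: "(\<Sum>\<mu><3. tu \<mu> (t, x1, x2) * vf \<mu> (t, x1, x2)) = 0"
    and v_space1: "(\<Sum>\<mu><3. eu \<mu> 1 (t, x1, x2) * vf \<mu> (t, x1, x2)) = - 3/2 * (x2 / l\<^sup>2)"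
    and v_space2: "(\<Sum>\<mu><3. eu \<mu> 2 (t, x1, x2) * vf \<mu> (t, x1, x2)) = - 3/2 * (- x1 / l\<^sup>2)"
begin

text \<open>Below, \<open>One_nat_def\<close> is removed from the simpset where needed: otherwise the index \<open>1\<close>
  is rewritten to \<open>Suc 0\<close> and the lemmas stated for index \<open>1\<close> no longer apply.\<close>

lemma va_at: "(\<Sum>\<mu><3. eu \<mu> 1 p * vf \<mu> p) = - 3/2 * g 2 / E"
  "(\<Sum>\<mu><3. eu \<mu> 2 p * vf \<mu> p) = 3/2 * g 1 / E"
  using v_space1 v_space2 by (simp_all del: One_nat_def add: dlamB_space)

lemma vf_at: "vf 0 p = 0" "vf 1 p = - 3/2 * g 2" "vf 2 p = 3/2 * g 1"
  using v_time va_at by (simp_all del: One_nat_def add: sum_lessThan_3 frame_at field_simps)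

lemma Splus_solution_at:
  assumes "majorana z"
  shows "Splus_solution {p} (tauB l) (eB l) (mB l) tu eu (\<lambda>_. 0) (\<lambda>_. 0) vf (zeta_plus l z)"
  apply (simp only: Splus_solution_def Let_def ball_simps simp_thms)
  apply (intro conjI allI impI)
  subgoal using assms by (simp add: majorana_zeta_plus)
  subgoal by (simp add: tau_ab_at)
  subgoal by (simp del: One_nat_def add: tau_0a_at va_at gam2_spatial)
  subgoal by (simp add: omega1_at v_time)
  subgoal for \<mu>
    apply (rule has_vector_derivative_by_scalar_matrix[OF has_vector_derivative_zeta_plus])
    apply (simp del: One_nat_def add: v_time)
    apply (erule less_3_cases)
      apply (simp_all del: One_nat_def add: tau_0mu_at vf_at va_at eB_at omega2_at
        gam_triple_products gam2_spatial dlamB_time)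
    apply (simp_all add: cmat_simps)
    done
  done

end

theorem mainTheorem6:
  fixes l :: real
    and tu :: "nat \<Rightarrow> pt \<Rightarrow> real"
    and eu :: "nat \<Rightarrow> nat \<Rightarrow> pt \<Rightarrow> real"
    and vf :: "nat \<Rightarrow> pt \<Rightarrow> real"
  assumes l_pos: "l > 0"
    and inv: "\<forall>p\<in>Mdom l. proj_inverse (tauB l) (eB l) tu eu p"
    and vfield: "\<forall>t x1 x2. (t, x1, x2) \<in> Mdom l \<longrightarrow>
        (\<Sum>\<mu><3. tu \<mu> (t, x1, x2) * vf \<mu> (t, x1, x2)) = 0 \<and>
        (\<Sum>\<mu><3. eu \<mu> 1 (t, x1, x2) * vf \<mu> (t, x1, x2)) = - 3/2 * (x2 / l^2) \<and>
        (\<Sum>\<mu><3. eu \<mu> 2 (t, x1, x2) * vf \<mu> (t, x1, x2)) = - 3/2 * (- x1 / l^2)"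
  shows "(\<forall>\<zeta>0. majorana \<zeta>0 \<and> \<zeta>0 \<noteq> 0 \<longrightarrow>
            Splus_solution (Mdom l) (tauB l) (eB l) (mB l) tu eu (\<lambda>_. 0) (\<lambda>_. 0) vf (zeta_plus l \<zeta>0)
            \<and> (\<forall>p\<in>Mdom l. zeta_plus l \<zeta>0 p \<noteq> 0))
       \<and> (\<exists>\<zeta>0 \<zeta>1. majorana \<zeta>0 \<and> \<zeta>0 \<noteq> 0 \<and> majorana \<zeta>1 \<and> \<zeta>1 \<noteq> 0 \<and>
            (\<forall>a b :: real. (\<forall>p\<in>Mdom l. a *\<^sub>R zeta_plus l \<zeta>0 p + b *\<^sub>R zeta_plus l \<zeta>1 p = 0)
               \<longrightarrow> a = 0 \<and> b = 0))
       \<and> (\<forall>p\<in>Mdom l. \<forall>\<mu><3. \<forall>a\<in>{1,2}. omega1 (tauB l) (eB l) (mB l) tu eu \<mu> a p = 0)"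
proof -
  have background: "background_point_vfield l t x1 x2 tu eu vf" if "(t, x1, x2) \<in> Mdom l" for t x1 x2
    using l_pos inv vfield that
    by (simp add: background_point_vfield_def background_point_def background_point_vfield_axioms_def)
  have solution: "Splus_solution (Mdom l) (tauB l) (eB l) (mB l) tu eu (\<lambda>_. 0) (\<lambda>_. 0) vf (zeta_plus l \<zeta>0)"
    if "majorana \<zeta>0" for \<zeta>0
    using background_point_vfield.Splus_solution_at[OF background that]
    by (auto simp: Splus_solution_pointwise[of "Mdom l"])
  have boost_connection: "omega1 (tauB l) (eB l) (mB l) tu eu \<mu> a p = 0"
    if "p \<in> Mdom l" "\<mu> < 3" "a \<in> {1, 2}" for p \<mu> a
    using that background background_point_vfield.axioms(1) background_point.omega1_at
    by (cases p) blast
  have "(0, 0, 0) \<in> Mdom l" using l_pos by (simp add: Mdom_def)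
  then show ?thesis
    using solution zeta_plus_nonzero zeta_plus_linear_independent boost_connection by blast
qed

end
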